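(* Let $\mathcal F$ be a Hilbert space with metric $d$ induced by its norm, $\mathcal D=(\phi_i)_{i\in\mathbb N}\subset\mathcal F$, and $\pi:\mathbb N\to\mathbb N$ of at most polynomial growth. For every finite $I\subset\mathbb N$ let $(\tilde\phi^I_i)_{i\in I}$ be an orthonormalization of $(\phi_i)_{i\in I}$ (e.g. Gram–Schmidt: pairwise orthogonal vectors, each of norm $0$ or $1$, spanning the same space as $(\phi_i)_{i\in I}$). For $M\in\mathbb N$ and $c>0$ set $$\Sigma^\pi_M=\Big\{\sum_{i\in I}c_i\phi_i:I\subset\{1,\dots,\pi(M)\},|I|\le M,(c_i)\in\mathbb R^I\Big\},\quad \tilde\Sigma^{\pi,c}_M=\Big\{\sum_{i\in I}\tilde c_i\tilde\phi^I_i:I\subset\{1,\dots,\pi(M)\},|I|\le M,(\tilde c_i)\in[-c,c]^I\Big\}.$$ Then for every $c>0$ the sequence $\tilde\Sigma^{\pi,c}=(\tilde\Sigma^{\pi,c}_M)_M$ is $\infty$-encodable in $(\mathcal F,d)$, and for every bounded non-empty $\mathcal C\subset\mathcal F$, $$\gamma^*(\mathcal C|\Sigma^\pi)=\max_{c>0}\gamma^*(\mathcal C|\tilde\Sigma^{\pi,c})$$ (in particular the maximum is attained).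
   Context: Approximation speed: $\gamma^*(\mathcal C|\Sigma)=\sup\{\gamma\in\mathbb R:\sup_{f\in\mathcal C}\inf_{\Phi\in\Sigma_M}d(f,\Phi)=O(M^{-\gamma})\text{ as }M\to\infty\}\in[-\infty,\infty]$ ($\sup\emptyset=-\infty$). A finite $X\subset A$ is an $\varepsilon$-covering of $A$ if every point of $A$ is within distance $\varepsilon$ of some point of $X$. For $\gamma,h>0$, a $(\gamma,h)$-encoding of $\Sigma=(\Sigma_M)_M$ is a sequence $(\Sigma(\gamma,h)_M)_M$ such that for some $c_1,c_2>0$ and all $M$, $\Sigma(\gamma,h)_M$ is a $c_1M^{-\gamma}$-covering of $\Sigma_M$ with $\log_2|\Sigma(\gamma,h)_M|\le c_2M^{1+h}$. $\Sigma$ is $\gamma$-encodable if it admits a $(\gamma,h)$-encoding for every $h>0$, and $\infty$-encodable if it is $\gamma$-encodable for every $\gamma>0$. *)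

theory Defs
  imports "HOL-Analysis.Analysis" "HOL-Library.Landau_Symbols"
begin

text \<open>Approximation speed: sup of all real gamma such that
  sup over f in C of inf over Phi in Sigma M of d(f,Phi) is O(M powr -gamma) as M tends to infinity.
  The big-O condition is written out: eventually, for all f in C, the distance is bounded
  by K * M powr -gamma (distances are nonnegative, and a sup is bounded iff all elements are).\<close>
definition approx_speed :: "'a::metric_space set \<Rightarrow> (nat \<Rightarrow> 'a set) \<Rightarrow> ereal" where
  "approx_speed C \<Sigma> = Sup {ereal \<gamma> | \<gamma>. \<exists>K. \<forall>\<^sub>F M in sequentially.
       \<forall>f\<in>C. infdist f (\<Sigma> M) \<le> K * real M powr (- \<gamma>)}"

definition is_covering :: "'a::metric_space set \<Rightarrow> 'a set \<Rightarrow> real \<Rightarrow> bool" where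
  "is_covering X A \<epsilon> \<longleftrightarrow> finite X \<and> X \<subseteq> A \<and> (\<forall>a\<in>A. \<exists>x\<in>X. dist a x \<le> \<epsilon>)"

definition is_encoding :: "real \<Rightarrow> real \<Rightarrow> (nat \<Rightarrow> 'a::metric_space set) \<Rightarrow> (nat \<Rightarrow> 'a set) \<Rightarrow> bool" where
  "is_encoding \<gamma> h \<Sigma> E \<longleftrightarrow> (\<exists>c1 c2. c1 > 0 \<and> c2 > 0 \<and> (\<forall>M\<ge>1.
      is_covering (E M) (\<Sigma> M) (c1 * real M powr (- \<gamma>)) \<and>
      log 2 (real (card (E M))) \<le> c2 * real M powr (1 + h)))"

definition gamma_encodable :: "real \<Rightarrow> (nat \<Rightarrow> 'a::metric_space set) \<Rightarrow> bool" where
  "gamma_encodable \<gamma> \<Sigma> \<longleftrightarrow> (\<forall>h>0. \<exists>E. is_encoding \<gamma> h \<Sigma> E)"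

definition inf_encodable :: "(nat \<Rightarrow> 'a::metric_space set) \<Rightarrow> bool" where
  "inf_encodable \<Sigma> \<longleftrightarrow> (\<forall>\<gamma>>0. gamma_encodable \<gamma> \<Sigma>)"

definition Sigma_pi :: "(nat \<Rightarrow> 'a::real_vector) \<Rightarrow> (nat \<Rightarrow> nat) \<Rightarrow> nat \<Rightarrow> 'a set" where
  "Sigma_pi \<phi> \<pi> M = {(\<Sum>i\<in>I. c i *\<^sub>R \<phi> i) | I c. I \<subseteq> {1..\<pi> M} \<and> card I \<le> M}"

definition Sigma_tilde :: "(nat set \<Rightarrow> nat \<Rightarrow> 'a::real_vector) \<Rightarrow> (nat \<Rightarrow> nat) \<Rightarrow> real \<Rightarrow> nat \<Rightarrow> 'a set" where
  "Sigma_tilde \<psi> \<pi> c M = {(\<Sum>i\<in>I. d i *\<^sub>R \<psi> I i) | I d. I \<subseteq> {1..\<pi> M} \<and> card I \<le> M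
       \<and> (\<forall>i\<in>I. d i \<in> {-c..c})}"

definition is_orthonormalization :: "(nat \<Rightarrow> 'a::real_inner) \<Rightarrow> (nat set \<Rightarrow> nat \<Rightarrow> 'a) \<Rightarrow> bool" where
  "is_orthonormalization \<phi> \<psi> \<longleftrightarrow> (\<forall>I. finite I \<longrightarrow>
      (\<forall>i\<in>I. \<forall>j\<in>I. i \<noteq> j \<longrightarrow> inner (\<psi> I i) (\<psi> I j) = 0) \<and>
      (\<forall>i\<in>I. norm (\<psi> I i) = 0 \<or> norm (\<psi> I i) = 1) \<and>
      span (\<psi> I ` I) = span (\<phi> ` I))"

end

theory Submission
  imports Defs
begin

text \<open>
  Given \<open>g = (\<Sum>i\<in>I. a i *\<^sub>R \<phi> i)\<close> in \<open>\<Sigma>\<^sup>\<pi>\<^sub>M\<close>, the orthogonal projection of \<open>f\<close> onto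
  \<open>span (\<phi> ` I) = span (\<psi> I ` I)\<close> is at least as close to \<open>f\<close> as \<open>g\<close>, and its coordinates
  \<open>f \<bullet> \<psi> I i\<close> in the orthonormalized system are bounded by \<open>norm f\<close>. Hence on a set bounded
  by \<open>R\<close> the distances to \<open>\<Sigma>\<^sup>\<pi>\<^sub>M\<close> and to \<open>\<Sigma>\<^sup>\<pi>\<^sup>,\<^sup>R\<^sub>M\<close> coincide, so both classes have the same
  approximation speed; the inclusion \<open>\<Sigma>\<^sup>\<pi>\<^sup>,\<^sup>c\<^sub>M \<subseteq> \<Sigma>\<^sup>\<pi>\<^sub>M\<close> bounds the speed for every other \<open>c\<close>.

  For the encoding, round each of the at most \<open>M\<close> coefficients in \<open>[-c, c]\<close> to a grid of
  mesh \<open>2c / M\<^sup>q\<close> with \<open>q \<ge> \<gamma> + 1\<close>. The orthonormalized vectors have norm at most 1, so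
  the error is at most \<open>M \<cdot> 2c / M\<^sup>q \<le> 2c M\<^sup>-\<^sup>\<gamma>\<close>, while there are at most
  \<open>(M + 1) (\<pi> M + 1)\<^sup>M (M\<^sup>q + 1)\<^sup>M\<close> codewords: as \<open>\<pi>\<close> grows polynomially, their logarithm is
  \<open>O(M log M)\<close>, which is \<open>O(M\<^sup>1\<^sup>+\<^sup>h)\<close> for every \<open>h > 0\<close>.
\<close>

lemma span_image_eq_range_sum:
  fixes \<phi> :: "'i \<Rightarrow> 'a::real_vector"
  assumes "finite I"
  shows "span (\<phi> ` I) = range (\<lambda>c. \<Sum>i\<in>I. c i *\<^sub>R \<phi> i)" (is "_ = range ?\<Phi>")
proof
  have "subspace (range ?\<Phi>)"
    unfolding subspace_def
  proof safe
    show "0 \<in> range ?\<Phi>" using rangeI[of ?\<Phi> "\<lambda>_. 0"] by simp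
    show "?\<Phi> a + ?\<Phi> b \<in> range ?\<Phi>" for a b
      using rangeI[of ?\<Phi> "\<lambda>i. a i + b i"] by (simp add: sum.distrib scaleR_add_left)
    show "r *\<^sub>R ?\<Phi> a \<in> range ?\<Phi>" for r a
      using rangeI[of ?\<Phi> "\<lambda>i. r * a i"] by (simp add: scaleR_sum_right)
  qed
  moreover have "\<phi> ` I \<subseteq> range ?\<Phi>"
  proof
    fix v assume "v \<in> \<phi> ` I"
    then obtain j where "j \<in> I" "v = \<phi> j" by blast
    then have "v = ?\<Phi> (\<lambda>i. if i = j then 1 else 0)"
      using assms by (simp add: if_distrib[of "\<lambda>r. r *\<^sub>R _"] cong: if_cong)
    then show "v \<in> range ?\<Phi>"
      using rangeI[of ?\<Phi> "\<lambda>i. if i = j then 1 else 0"] by (simp only:)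
  qed
  ultimately show "span (\<phi> ` I) \<subseteq> range ?\<Phi>"
    by (intro span_minimal)
qed (auto intro: span_sum span_scale span_base)

lemma dist_orthonormal_projection_le:
  fixes \<psi> :: "'i \<Rightarrow> 'a::real_inner"
  assumes "finite I"
    and orth: "\<And>i j. i \<in> I \<Longrightarrow> j \<in> I \<Longrightarrow> i \<noteq> j \<Longrightarrow> \<psi> i \<bullet> \<psi> j = 0"
    and unit: "\<And>i. i \<in> I \<Longrightarrow> norm (\<psi> i) = 0 \<or> norm (\<psi> i) = 1"
    and g: "g \<in> span (\<psi> ` I)"
  shows "dist f (\<Sum>i\<in>I. (f \<bullet> \<psi> i) *\<^sub>R \<psi> i) \<le> dist f g"
proof -
  define p where "p = (\<Sum>i\<in>I. (f \<bullet> \<psi> i) *\<^sub>R \<psi> i)"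
  have p_coeff: "p \<bullet> \<psi> j = f \<bullet> \<psi> j" if "j \<in> I" for j
  proof -
    have "p \<bullet> \<psi> j = (\<Sum>i\<in>I. if i = j then (f \<bullet> \<psi> j) * (\<psi> j \<bullet> \<psi> j) else 0)"
      unfolding p_def inner_sum_left by (rule sum.cong) (auto simp: orth that)
    also have "\<dots> = f \<bullet> \<psi> j"
      using unit[OF that] \<open>finite I\<close> that by (auto simp: norm_eq_1)
    finally show ?thesis .
  qed
  have "p \<in> span (\<psi> ` I)"
    unfolding p_def by (intro span_sum span_scale span_base) auto
  with g have "p - g \<in> span (\<psi> ` I)"
    by (intro span_diff)
  then have "orthogonal (f - p) (p - g)"
    by (rule orthogonal_to_span) (auto simp: orthogonal_def inner_diff_left p_coeff)
  then have "(norm ((f - p) + (p - g)))\<^sup>2 = (norm (f - p))\<^sup>2 + (norm (p - g))\<^sup>2"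
    by (rule norm_add_Pythagorean)
  then have "(norm (f - p))\<^sup>2 \<le> (norm (f - g))\<^sup>2"
    by simp
  then have "norm (f - p) \<le> norm (f - g)"
    by (rule power2_le_imp_le) simp
  then show ?thesis
    by (simp add: dist_norm p_def)
qed

lemma card_subsets_card_le:
  assumes "finite A"
  shows "card {B. B \<subseteq> A \<and> card B \<le> k} \<le> (k + 1) * (card A + 1) ^ k"
proof -
  have "{B. B \<subseteq> A \<and> card B \<le> k} = (\<Union>j\<le>k. {B. B \<subseteq> A \<and> card B = j})"
    by auto
  then have "card {B. B \<subseteq> A \<and> card B \<le> k} \<le> (\<Sum>j\<le>k. card A choose j)"
    using card_UN_le[of "{..k}" "\<lambda>j. {B. B \<subseteq> A \<and> card B = j}"] by (simp add: n_subsets assms)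
  also have "\<dots> \<le> (\<Sum>j\<le>k. (card A + 1) ^ k)"
  proof (rule sum_mono)
    fix j assume "j \<in> {..k}"
    have "card A choose j \<le> (card A + 1) ^ j"
    proof (cases "j \<le> card A")
      case True
      then have "card A choose j \<le> card A ^ j" by (rule binomial_le_pow)
      also have "\<dots> \<le> (card A + 1) ^ j" by (simp add: power_mono)
      finally show ?thesis .
    qed (simp add: binomial_eq_0)
    also have "\<dots> \<le> (card A + 1) ^ k" using \<open>j \<in> {..k}\<close> by (simp add: power_increasing)
    finally show "card A choose j \<le> (card A + 1) ^ k" .
  qed
  finally show ?thesis by simp
qed

lemma bigo_realpow_imp_bound:
  fixes f :: "nat \<Rightarrow> real"
  assumes "f \<in> O(\<lambda>M. real M ^ k)"
  obtains K where "K > 0" "\<And>M. M \<ge> 1 \<Longrightarrow> f M \<le> K * real M ^ k"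
proof -
  obtain K where "K > 0" and "\<forall>\<^sub>F M in sequentially. \<bar>f M\<bar> \<le> K * real M ^ k"
    using landau_o.bigE[OF assms] by auto
  then obtain N where K: "\<And>M. M \<ge> N \<Longrightarrow> \<bar>f M\<bar> \<le> K * real M ^ k"
    by (auto simp: eventually_sequentially)
  define K' where "K' = K + (\<Sum>M<N. \<bar>f M\<bar>)"
  have "K' > 0" "K \<le> K'" "(\<Sum>M<N. \<bar>f M\<bar>) \<le> K'"
    using \<open>K > 0\<close> by (auto simp: K'_def sum_nonneg add_pos_nonneg)
  have "f M \<le> K' * real M ^ k" if "M \<ge> 1" for M
  proof (cases "M \<ge> N")
    case True
    then have "f M \<le> K * real M ^ k"
      using K by fastforce
    also have "\<dots> \<le> K' * real M ^ k"
      using \<open>K \<le> K'\<close> by (simp add: mult_right_mono)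
    finally show ?thesis .
  next
    case False
    then have "f M \<le> (\<Sum>M<N. \<bar>f M\<bar>)"
      using member_le_sum[of M "{..<N}" "\<lambda>M. \<bar>f M\<bar>"] by fastforce
    also have "\<dots> \<le> K'"
      by fact
    also have "\<dots> \<le> K' * real M ^ k"
      using \<open>K' > 0\<close> \<open>M \<ge> 1\<close> by (simp add: mult_le_cancel_left1)
    finally show ?thesis .
  qed
  with \<open>K' > 0\<close> show ?thesis
    by (rule that)
qed

lemma log_power_le_powr:
  assumes "B \<ge> 1" "h > 0"
  obtains C where "C > 0"
    "\<And>M. M \<ge> 1 \<Longrightarrow> log 2 ((B * real M ^ p) ^ (a * M)) \<le> C * real M powr (1 + h)"
proof
  define L where "L = log 2 B + real p / (h * ln 2)"
  have "L \<ge> 0" using assms by (simp add: L_def)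
  show "real a * L + 1 > 0" using \<open>L \<ge> 0\<close> by (simp add: add_nonneg_pos)
  fix M :: nat assume "M \<ge> 1"
  define m where "m = real M"
  have "m \<ge> 1" using \<open>M \<ge> 1\<close> by (simp add: m_def)
  have "1 \<le> m powr h" using \<open>m \<ge> 1\<close> \<open>h > 0\<close> by (simp add: ge_one_powr_ge_zero)
  have "ln (m powr h) \<le> m powr h - 1"
    using \<open>1 \<le> m powr h\<close> \<open>m \<ge> 1\<close> by (intro ln_le_minus_one) simp
  then have "h * ln m \<le> m powr h"
    using \<open>m \<ge> 1\<close> by (simp add: ln_powr)
  then have "log 2 m \<le> m powr h / (h * ln 2)"
    using \<open>h > 0\<close> by (simp add: log_def divide_simps mult.commute)
  then have "real p * log 2 m \<le> real p * (m powr h / (h * ln 2))"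
    by (rule mult_left_mono) simp
  moreover have "log 2 B \<le> log 2 B * m powr h"
    using \<open>1 \<le> m powr h\<close> assms(1) by (simp add: mult_le_cancel_left1)
  ultimately have "log 2 B + real p * log 2 m \<le> L * m powr h"
    by (simp add: L_def algebra_simps)
  have "log 2 ((B * m ^ p) ^ (a * M)) = real a * m * (log 2 B + real p * log 2 m)"
    using assms \<open>m \<ge> 1\<close> by (simp add: log_nat_power log_mult m_def)
  also have "\<dots> \<le> real a * m * (L * m powr h)"
    using \<open>log 2 B + real p * log 2 m \<le> L * m powr h\<close> \<open>m \<ge> 1\<close> by (intro mult_left_mono) auto
  also have "\<dots> \<le> (real a * L + 1) * m powr (1 + h)"
    using \<open>m \<ge> 1\<close> \<open>L \<ge> 0\<close> by (simp add: powr_add algebra_simps)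
  finally show "log 2 ((B * real M ^ p) ^ (a * M)) \<le> (real a * L + 1) * real M powr (1 + h)"
    by (simp add: m_def)
qed

definition grid :: "real \<Rightarrow> nat \<Rightarrow> real set" where
  "grid c n = (\<lambda>j. real j * (2 * c / real n) - c) ` {..n}"

lemma finite_grid: "finite (grid c n)"
  by (simp add: grid_def)

lemma grid_nonempty: "grid c n \<noteq> {}"
  by (simp add: grid_def)

lemma card_grid_le: "card (grid c n) \<le> n + 1"
  unfolding grid_def using card_image_le[of "{..n}"] by simp

lemma grid_subset:
  assumes "c \<ge> 0"
  shows "grid c n \<subseteq> {-c..c}"
proof
  fix y assume "y \<in> grid c n"
  then obtain j where j: "j \<le> n" and y: "y = real j * (2 * c / real n) - c"
    unfolding grid_def by blast
  have "real j * (2 * c / real n) \<le> 2 * c"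
  proof (cases "n = 0")
    case False
    then have "real j / real n \<le> 1" using j by simp
    then have "2 * c * (real j / real n) \<le> 2 * c * 1" using assms by (intro mult_left_mono) auto
    then show ?thesis by (simp add: mult.commute)
  qed (use j assms in simp)
  with y assms show "y \<in> {-c..c}" by simp
qed

lemma grid_dense:
  assumes "c > 0" "n \<ge> 1" "x \<in> {-c..c}"
  shows "\<exists>y\<in>grid c n. \<bar>x - y\<bar> \<le> 2 * c / real n"
proof -
  define \<delta> where "\<delta> = 2 * c / real n"
  have \<delta>: "\<delta> > 0" "real n * \<delta> = 2 * c"
    using assms by (auto simp: \<delta>_def)
  define t where "t = (x + c) / \<delta>"
  have "0 \<le> t" "t \<le> real n"
    using assms \<delta> by (auto simp: t_def divide_le_eq)
  define j where "j = nat \<lfloor>t\<rfloor>"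
  have j: "real j \<le> t" "t < real j + 1"
    using \<open>0 \<le> t\<close> by (auto simp: j_def)
  then have "j \<le> n" using \<open>t \<le> real n\<close> by linarith
  then have "real j * \<delta> - c \<in> grid c n"
    unfolding grid_def \<delta>_def by blast
  moreover have "real j * \<delta> \<le> x + c" "x + c < (real j + 1) * \<delta>"
    using j \<delta> by (auto simp: t_def le_divide_eq divide_less_eq)
  then have "\<bar>x - (real j * \<delta> - c)\<bar> \<le> \<delta>"
    by (simp add: algebra_simps abs_if)
  ultimately show ?thesis
    unfolding \<delta>_def by blast
qed

definition sparse_sums :: "(nat set \<Rightarrow> nat \<Rightarrow> 'a::real_vector) \<Rightarrow> nat \<Rightarrow> nat \<Rightarrow> real set \<Rightarrow> 'a set" where
  "sparse_sums \<psi> N M D = {(\<Sum>i\<in>I. d i *\<^sub>R \<psi> I i) | I d.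
     I \<subseteq> {1..N} \<and> card I \<le> M \<and> (\<forall>i\<in>I. d i \<in> D)}"

lemma zero_in_sparse_sums: "0 \<in> sparse_sums \<psi> N M D"
  unfolding sparse_sums_def by force

lemma Sigma_tilde_eq_sparse_sums: "Sigma_tilde \<psi> \<pi> c M = sparse_sums \<psi> (\<pi> M) M {-c..c}"
  by (simp add: Sigma_tilde_def sparse_sums_def)

lemma zero_in_Sigma_tilde: "0 \<in> Sigma_tilde \<psi> \<pi> c M"
  unfolding Sigma_tilde_eq_sparse_sums by (rule zero_in_sparse_sums)

lemma sparse_sums_mono: "D \<subseteq> D' \<Longrightarrow> sparse_sums \<psi> N M D \<subseteq> sparse_sums \<psi> N M D'"
  unfolding sparse_sums_def by blast

lemma sparse_sums_eq_image:
  "sparse_sums \<psi> N M D = (\<lambda>(I, d). \<Sum>i\<in>I. d i *\<^sub>R \<psi> I i) `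
     (SIGMA I:{I. I \<subseteq> {1..N} \<and> card I \<le> M}. I \<rightarrow>\<^sub>E D)" (is "_ = ?F ` ?A")
proof (intro equalityI subsetI)
  fix x assume "x \<in> sparse_sums \<psi> N M D"
  then obtain I d where x: "x = (\<Sum>i\<in>I. d i *\<^sub>R \<psi> I i)"
    and I: "I \<subseteq> {1..N}" "card I \<le> M" and d: "\<forall>i\<in>I. d i \<in> D"
    unfolding sparse_sums_def by blast
  have "x = ?F (I, restrict d I)"
    unfolding x by (simp cong: sum.cong)
  moreover have "(I, restrict d I) \<in> ?A"
    using I d by simp
  ultimately show "x \<in> ?F ` ?A"
    by (rule image_eqI)
next
  fix x assume "x \<in> ?F ` ?A"
  then obtain I d where "x = (\<Sum>i\<in>I. d i *\<^sub>R \<psi> I i)" "I \<subseteq> {1..N}" "card I \<le> M" "d \<in> I \<rightarrow>\<^sub>E D"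
    by auto
  then show "x \<in> sparse_sums \<psi> N M D"
    unfolding sparse_sums_def by (auto simp: PiE_iff)
qed

lemma finite_sparse_sums:
  assumes "finite D"
  shows "finite (sparse_sums \<psi> N M D)"
proof -
  have "finite (SIGMA I:{I. I \<subseteq> {1..N} \<and> card I \<le> M}. I \<rightarrow>\<^sub>E D)"
    using assms by (intro finite_SigmaI finite_PiE) (auto dest: finite_subset)
  then show ?thesis
    unfolding sparse_sums_eq_image by (rule finite_imageI)
qed

lemma card_sparse_sums_le:
  assumes "finite D" "D \<noteq> {}"
  shows "card (sparse_sums \<psi> N M D) \<le> (M + 1) * (N + 1) ^ M * card D ^ M"
proof -
  define S where "S = {I. I \<subseteq> {1..N} \<and> card I \<le> M}"
  have "finite S"
    by (simp add: S_def)
  have fin_I: "finite I" if "I \<in> S" for I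
    using that by (auto simp: S_def dest: finite_subset)
  have "card (sparse_sums \<psi> N M D) \<le> card (SIGMA I:S. I \<rightarrow>\<^sub>E D)"
    unfolding sparse_sums_eq_image S_def[symmetric]
    using \<open>finite S\<close> fin_I \<open>finite D\<close> by (intro card_image_le finite_SigmaI finite_PiE)
  also have "\<dots> = (\<Sum>I\<in>S. card D ^ card I)"
    using \<open>finite S\<close> fin_I \<open>finite D\<close> by (simp add: card_PiE finite_PiE)
  also have "\<dots> \<le> (\<Sum>I\<in>S. card D ^ M)"
    using assms by (intro sum_mono power_increasing) (auto simp: S_def card_gt_0_iff Suc_le_eq)
  also have "\<dots> = card S * card D ^ M"
    by simp
  also have "\<dots> \<le> (M + 1) * (N + 1) ^ M * card D ^ M"
    using card_subsets_card_le[of "{1..N}" M] unfolding S_def by (intro mult_right_mono) simp_all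
  finally show ?thesis .
qed

lemma sparse_sums_approx:
  assumes norm_le: "\<And>I i. finite I \<Longrightarrow> i \<in> I \<Longrightarrow> norm (\<psi> I i) \<le> 1"
    and near: "\<And>x. x \<in> D \<Longrightarrow> \<exists>y\<in>D'. \<bar>x - y\<bar> \<le> \<delta>"
    and "\<delta> \<ge> 0" "a \<in> sparse_sums \<psi> N M D"
  shows "\<exists>b\<in>sparse_sums \<psi> N M D'. dist a b \<le> real M * \<delta>"
proof -
  obtain I d where a: "a = (\<Sum>i\<in>I. d i *\<^sub>R \<psi> I i)"
    and I: "I \<subseteq> {1..N}" "card I \<le> M" and d: "\<forall>i\<in>I. d i \<in> D"
    using \<open>a \<in> sparse_sums \<psi> N M D\<close> unfolding sparse_sums_def by blast
  have "finite I" using I(1) by (rule finite_subset) simp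
  have "\<forall>i\<in>I. \<exists>y. y \<in> D' \<and> \<bar>d i - y\<bar> \<le> \<delta>"
    using near d by blast
  then have "\<exists>e. \<forall>i\<in>I. e i \<in> D' \<and> \<bar>d i - e i\<bar> \<le> \<delta>"
    by (rule bchoice)
  then obtain e where e: "\<forall>i\<in>I. e i \<in> D' \<and> \<bar>d i - e i\<bar> \<le> \<delta>"
    by blast
  define b where "b = (\<Sum>i\<in>I. e i *\<^sub>R \<psi> I i)"
  have "b \<in> sparse_sums \<psi> N M D'"
    unfolding sparse_sums_def b_def using I e by blast
  moreover have "dist a b \<le> real M * \<delta>"
  proof -
    have "dist a b = norm (\<Sum>i\<in>I. (d i - e i) *\<^sub>R \<psi> I i)"
      by (simp add: dist_norm a b_def sum_subtractf scaleR_diff_left)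
    also have "\<dots> \<le> (\<Sum>i\<in>I. \<bar>d i - e i\<bar> * norm (\<psi> I i))"
      by (rule order_trans[OF norm_sum]) simp
    also have "\<dots> \<le> (\<Sum>i\<in>I. \<delta> * 1)"
      using e norm_le[OF \<open>finite I\<close>] by (intro sum_mono mult_mono) auto
    also have "\<dots> \<le> real M * \<delta>"
      using I(2) \<open>\<delta> \<ge> 0\<close> by (simp add: mult_right_mono)
    finally show ?thesis .
  qed
  ultimately show ?thesis by blast
qed

lemma sparse_sums_grid_covering:
  fixes \<psi> :: "nat set \<Rightarrow> nat \<Rightarrow> 'a::real_normed_vector"
  assumes norm_le: "\<And>I i. finite I \<Longrightarrow> i \<in> I \<Longrightarrow> norm (\<psi> I i) \<le> 1"
    and "c > 0" "M \<ge> 1" "\<gamma> + 1 \<le> real q"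
  shows "is_covering (sparse_sums \<psi> N M (grid c (M ^ q))) (sparse_sums \<psi> N M {-c..c})
    (2 * c * real M powr - \<gamma>)"
  unfolding is_covering_def
proof (intro conjI ballI)
  show "finite (sparse_sums \<psi> N M (grid c (M ^ q)))"
    by (rule finite_sparse_sums[OF finite_grid])
  show "sparse_sums \<psi> N M (grid c (M ^ q)) \<subseteq> sparse_sums \<psi> N M {-c..c}"
    using \<open>c > 0\<close> by (intro sparse_sums_mono grid_subset) simp
  fix a assume a: "a \<in> sparse_sums \<psi> N M {-c..c}"
  have "1 \<le> M ^ q" "0 \<le> 2 * c / real (M ^ q)"
    using \<open>M \<ge> 1\<close> \<open>c > 0\<close> by simp_all
  then obtain b where b: "b \<in> sparse_sums \<psi> N M (grid c (M ^ q))"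
    and dist: "dist a b \<le> real M * (2 * c / real (M ^ q))"
    using sparse_sums_approx[where D = "{-c..c}", OF norm_le grid_dense[OF \<open>c > 0\<close>] _ a] by blast
  note dist
  also have "\<dots> = 2 * c * real M powr (1 - real q)"
    using \<open>M \<ge> 1\<close> by (simp add: powr_diff powr_realpow)
  also have "\<dots> \<le> 2 * c * real M powr (- \<gamma>)"
    using \<open>M \<ge> 1\<close> \<open>c > 0\<close> \<open>\<gamma> + 1 \<le> real q\<close> by (intro mult_left_mono powr_mono) auto
  finally show "\<exists>b\<in>sparse_sums \<psi> N M (grid c (M ^ q)). dist a b \<le> 2 * c * real M powr - \<gamma>"
    using b by blast
qed

lemma card_sparse_sums_grid_le:
  assumes "M \<ge> 1" "K > 0" "real N \<le> K * real M ^ k"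
  shows "real (card (sparse_sums \<psi> N M (grid c (M ^ q))))
    \<le> ((K + 2) * real M ^ (k + q + 1)) ^ (3 * M)"
proof -
  define P where "P = real M ^ (k + q + 1)"
  define X where "X = (K + 2) * P"
  have pow_le: "real M ^ j \<le> P" if "j \<le> k + q + 1" for j
    unfolding P_def using assms(1) that by (intro power_increasing) auto
  from pow_le[of 1] pow_le[of k] pow_le[of q]
  have "real M \<le> P" "real M ^ k \<le> P" "real M ^ q \<le> P"
    by simp_all
  moreover have "1 \<le> real M" "1 \<le> real M ^ k" "1 \<le> real M ^ q"
    using assms(1) by simp_all
  moreover have "K * real M ^ k \<le> K * P" "0 \<le> K * P"
    using \<open>real M ^ k \<le> P\<close> \<open>1 \<le> real M ^ k\<close> assms(2) by simp_all
  ultimately have "1 \<le> X" and M_le: "real (M + 1) \<le> X" and N_le: "real (N + 1) \<le> X"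
    and grid_le: "real (M ^ q + 1) \<le> X"
    using assms(3) unfolding X_def by (simp_all add: algebra_simps)
  have "card (sparse_sums \<psi> N M (grid c (M ^ q))) \<le> (M + 1) * (N + 1) ^ M * card (grid c (M ^ q)) ^ M"
    by (rule card_sparse_sums_le[OF finite_grid grid_nonempty])
  also have "\<dots> \<le> (M + 1) * (N + 1) ^ M * (M ^ q + 1) ^ M"
    by (intro mult_left_mono power_mono card_grid_le) simp_all
  finally have "real (card (sparse_sums \<psi> N M (grid c (M ^ q))))
      \<le> real (M + 1) * real (N + 1) ^ M * real (M ^ q + 1) ^ M"
    by (metis of_nat_le_iff of_nat_mult of_nat_power)
  also have "\<dots> \<le> X * X ^ M * X ^ M"
    using M_le N_le grid_le by (intro mult_mono power_mono) auto
  also have "\<dots> = X ^ (2 * M + 1)"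
    by (simp add: power_add mult_2)
  also have "\<dots> \<le> X ^ (3 * M)"
    using \<open>1 \<le> X\<close> assms(1) by (intro power_increasing) auto
  finally show ?thesis
    unfolding X_def P_def .
qed

lemma is_orthonormalizationD:
  assumes "is_orthonormalization \<phi> \<psi>" "finite I"
  shows "\<And>i j. i \<in> I \<Longrightarrow> j \<in> I \<Longrightarrow> i \<noteq> j \<Longrightarrow> \<psi> I i \<bullet> \<psi> I j = 0"
    and "\<And>i. i \<in> I \<Longrightarrow> norm (\<psi> I i) = 0 \<or> norm (\<psi> I i) = 1"
    and "span (\<psi> I ` I) = span (\<phi> ` I)"
  using assms unfolding is_orthonormalization_def by blast+

lemma is_orthonormalization_norm_le_1:
  assumes "is_orthonormalization \<phi> \<psi>" "finite I" "i \<in> I"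
  shows "norm (\<psi> I i) \<le> 1"
  using is_orthonormalizationD(2)[OF assms] by auto

lemma zero_in_Sigma_pi: "0 \<in> Sigma_pi \<phi> \<pi> M"
  unfolding Sigma_pi_def by force

lemma Sigma_tilde_subset_Sigma_pi:
  assumes "is_orthonormalization \<phi> \<psi>"
  shows "Sigma_tilde \<psi> \<pi> c M \<subseteq> Sigma_pi \<phi> \<pi> M"
proof
  fix x assume "x \<in> Sigma_tilde \<psi> \<pi> c M"
  then obtain I d where x: "x = (\<Sum>i\<in>I. d i *\<^sub>R \<psi> I i)" and I: "I \<subseteq> {1..\<pi> M}" "card I \<le> M"
    unfolding Sigma_tilde_def by blast
  have "finite I" using I(1) by (rule finite_subset) simp
  have "x \<in> span (\<psi> I ` I)"
    unfolding x by (intro span_sum span_scale span_base) auto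
  also have "\<dots> = span (\<phi> ` I)"
    using assms \<open>finite I\<close> by (rule is_orthonormalizationD(3))
  finally obtain a where "x = (\<Sum>i\<in>I. a i *\<^sub>R \<phi> i)"
    using span_image_eq_range_sum[OF \<open>finite I\<close>] by blast
  with I show "x \<in> Sigma_pi \<phi> \<pi> M"
    unfolding Sigma_pi_def by blast
qed

lemma Sigma_tilde_closer_than_Sigma_pi:
  fixes \<phi> :: "nat \<Rightarrow> 'a::real_inner"
  assumes orth: "is_orthonormalization \<phi> \<psi>" and "norm f \<le> R" and "g \<in> Sigma_pi \<phi> \<pi> M"
  obtains p where "p \<in> Sigma_tilde \<psi> \<pi> R M" "dist f p \<le> dist f g"
proof -
  obtain I a where g: "g = (\<Sum>i\<in>I. a i *\<^sub>R \<phi> i)" and I: "I \<subseteq> {1..\<pi> M}" "card I \<le> M"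
    using \<open>g \<in> Sigma_pi \<phi> \<pi> M\<close> unfolding Sigma_pi_def by blast
  have "finite I"
    using I(1) by (rule finite_subset) simp
  note orthI = is_orthonormalizationD[OF orth \<open>finite I\<close>]
  define p where "p = (\<Sum>i\<in>I. (f \<bullet> \<psi> I i) *\<^sub>R \<psi> I i)"
  have "\<bar>f \<bullet> \<psi> I i\<bar> \<le> R" if "i \<in> I" for i
  proof -
    have "\<bar>f \<bullet> \<psi> I i\<bar> \<le> norm f * norm (\<psi> I i)"
      by (rule Cauchy_Schwarz_ineq2)
    also have "\<dots> \<le> R * 1"
      using \<open>norm f \<le> R\<close> order_trans[OF norm_ge_zero \<open>norm f \<le> R\<close>]
        is_orthonormalization_norm_le_1[OF orth \<open>finite I\<close> that]
      by (intro mult_mono) auto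
    finally show ?thesis by simp
  qed
  with I have p_mem: "p \<in> Sigma_tilde \<psi> \<pi> R M"
    unfolding Sigma_tilde_def p_def by force
  have "g \<in> span (\<psi> I ` I)"
    unfolding orthI(3) g by (intro span_sum span_scale span_base) auto
  with \<open>finite I\<close> orthI(1,2) have "dist f p \<le> dist f g"
    unfolding p_def by (rule dist_orthonormal_projection_le)
  with p_mem show ?thesis
    by (rule that)
qed

lemma infdist_Sigma_tilde_eq_Sigma_pi:
  fixes \<phi> :: "nat \<Rightarrow> 'a::real_inner"
  assumes orth: "is_orthonormalization \<phi> \<psi>" and "norm f \<le> R"
  shows "infdist f (Sigma_tilde \<psi> \<pi> R M) = infdist f (Sigma_pi \<phi> \<pi> M)"
proof (rule antisym)
  have "infdist f (Sigma_tilde \<psi> \<pi> R M) \<le> dist f g" if g: "g \<in> Sigma_pi \<phi> \<pi> M" for g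
  proof -
    obtain p where p: "p \<in> Sigma_tilde \<psi> \<pi> R M" and "dist f p \<le> dist f g"
      using Sigma_tilde_closer_than_Sigma_pi[OF orth \<open>norm f \<le> R\<close> g] .
    from p have "infdist f (Sigma_tilde \<psi> \<pi> R M) \<le> dist f p"
      by (rule infdist_le)
    also note \<open>dist f p \<le> dist f g\<close>
    finally show ?thesis .
  qed
  then show "infdist f (Sigma_tilde \<psi> \<pi> R M) \<le> infdist f (Sigma_pi \<phi> \<pi> M)"
    unfolding infdist_def[of f "Sigma_pi \<phi> \<pi> M"] using zero_in_Sigma_pi[of \<phi> \<pi> M]
    by (auto intro: cINF_greatest)
  show "infdist f (Sigma_pi \<phi> \<pi> M) \<le> infdist f (Sigma_tilde \<psi> \<pi> R M)"
    using Sigma_tilde_subset_Sigma_pi[OF orth] zero_in_Sigma_tilde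
    by (intro infdist_mono) blast+
qed

lemma approx_speed_mono:
  assumes le: "\<And>M f. f \<in> C \<Longrightarrow> infdist f (\<Sigma> M) \<le> infdist f (\<Sigma>' M)"
  shows "approx_speed C \<Sigma>' \<le> approx_speed C \<Sigma>"
  unfolding approx_speed_def
proof (intro Sup_subset_mono subsetI)
  fix x
  assume "x \<in> {ereal \<gamma> |\<gamma>. \<exists>K. \<forall>\<^sub>F M in sequentially. \<forall>f\<in>C. infdist f (\<Sigma>' M) \<le> K * real M powr - \<gamma>}"
  then obtain \<gamma> K where x: "x = ereal \<gamma>"
    and bound: "\<forall>\<^sub>F M in sequentially. \<forall>f\<in>C. infdist f (\<Sigma>' M) \<le> K * real M powr - \<gamma>"
    by blast
  from bound have "\<forall>\<^sub>F M in sequentially. \<forall>f\<in>C. infdist f (\<Sigma> M) \<le> K * real M powr - \<gamma>"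
    by (rule eventually_mono) (meson le order_trans)
  with x show "x \<in> {ereal \<gamma> |\<gamma>. \<exists>K. \<forall>\<^sub>F M in sequentially. \<forall>f\<in>C. infdist f (\<Sigma> M) \<le> K * real M powr - \<gamma>}"
    by blast
qed

lemma Sigma_tilde_gamma_encodable:
  fixes \<psi> :: "nat set \<Rightarrow> nat \<Rightarrow> 'a::real_normed_vector"
  assumes poly: "(\<lambda>M. real (\<pi> M)) \<in> O(\<lambda>M. real M ^ k)"
    and norm_le: "\<And>I i. finite I \<Longrightarrow> i \<in> I \<Longrightarrow> norm (\<psi> I i) \<le> 1"
    and "c > 0"
  shows "gamma_encodable \<gamma> (Sigma_tilde \<psi> \<pi> c)"
  unfolding gamma_encodable_def
proof (intro allI impI)
  fix h :: real assume "h > 0"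
  obtain K where "K > 0" and K: "\<And>M. M \<ge> 1 \<Longrightarrow> real (\<pi> M) \<le> K * real M ^ k"
    using bigo_realpow_imp_bound[OF poly] by blast
  obtain q :: nat where q: "\<gamma> + 1 \<le> real q"
    using real_arch_simple by blast
  have "K + 2 \<ge> 1"
    using \<open>K > 0\<close> by simp
  then obtain C where "C > 0" and C: "\<And>M. M \<ge> 1 \<Longrightarrow>
      log 2 (((K + 2) * real M ^ (k + q + 1)) ^ (3 * M)) \<le> C * real M powr (1 + h)"
    using \<open>h > 0\<close> by (rule log_power_le_powr[where p = "k + q + 1" and a = 3]) blast
  define E where "E M = sparse_sums \<psi> (\<pi> M) M (grid c (M ^ q))" for M
  have "is_encoding \<gamma> h (Sigma_tilde \<psi> \<pi> c) E"
    unfolding is_encoding_def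
  proof (rule exI[of _ "2 * c"], rule exI[of _ C], intro conjI allI impI)
    fix M :: nat assume "M \<ge> 1"
    show "is_covering (E M) (Sigma_tilde \<psi> \<pi> c M) (2 * c * real M powr - \<gamma>)"
      unfolding E_def Sigma_tilde_eq_sparse_sums
      using norm_le \<open>c > 0\<close> \<open>M \<ge> 1\<close> q by (rule sparse_sums_grid_covering)
    have "card (E M) > 0"
      unfolding E_def card_gt_0_iff using finite_sparse_sums[OF finite_grid] zero_in_sparse_sums
      by blast
    then have "log 2 (real (card (E M))) \<le> log 2 (((K + 2) * real M ^ (k + q + 1)) ^ (3 * M))"
      unfolding E_def
      by (intro log_mono card_sparse_sums_grid_le[OF \<open>M \<ge> 1\<close> \<open>K > 0\<close> K[OF \<open>M \<ge> 1\<close>]]) simp_all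
    also have "\<dots> \<le> C * real M powr (1 + h)"
      using C[OF \<open>M \<ge> 1\<close>] .
    finally show "log 2 (real (card (E M))) \<le> C * real M powr (1 + h)" .
  qed (use \<open>c > 0\<close> \<open>C > 0\<close> in simp_all)
  then show "\<exists>E. is_encoding \<gamma> h (Sigma_tilde \<psi> \<pi> c) E"
    by blast
qed

theorem mainTheorem15:
  fixes \<phi> :: "nat \<Rightarrow> 'a::{real_inner, complete_space}"
    and \<pi> :: "nat \<Rightarrow> nat"
    and \<psi> :: "nat set \<Rightarrow> nat \<Rightarrow> 'a"
  assumes poly: "\<exists>k::nat. (\<lambda>M. real (\<pi> M)) \<in> O(\<lambda>M. real M ^ k)"
    and orth: "is_orthonormalization \<phi> \<psi>"
  shows "(\<forall>c>0. inf_encodable (Sigma_tilde \<psi> \<pi> c)) \<and>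
    (\<forall>C::'a set. bounded C \<and> C \<noteq> {} \<longrightarrow>
       approx_speed C (Sigma_pi \<phi> \<pi>) \<in> (\<lambda>c. approx_speed C (Sigma_tilde \<psi> \<pi> c)) ` {0<..} \<and>
       (\<forall>c>0. approx_speed C (Sigma_tilde \<psi> \<pi> c) \<le> approx_speed C (Sigma_pi \<phi> \<pi>)))"
proof (intro conjI allI impI)
  fix c :: real assume "c > 0"
  show "inf_encodable (Sigma_tilde \<psi> \<pi> c)"
    unfolding inf_encodable_def
    using poly Sigma_tilde_gamma_encodable is_orthonormalization_norm_le_1[OF orth] \<open>c > 0\<close>
    by blast
next
  fix C :: "'a set" assume "bounded C \<and> C \<noteq> {}"
  then obtain R where "R > 0" and R: "\<And>f. f \<in> C \<Longrightarrow> norm f \<le> R"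
    by (auto simp: bounded_pos)
  have "approx_speed C (Sigma_pi \<phi> \<pi>) = approx_speed C (Sigma_tilde \<psi> \<pi> R)"
    using infdist_Sigma_tilde_eq_Sigma_pi[OF orth R] by (intro antisym approx_speed_mono) simp_all
  with \<open>R > 0\<close> show "approx_speed C (Sigma_pi \<phi> \<pi>) \<in> (\<lambda>c. approx_speed C (Sigma_tilde \<psi> \<pi> c)) ` {0<..}"
    by auto
next
  fix C :: "'a set" and c :: real
  show "approx_speed C (Sigma_tilde \<psi> \<pi> c) \<le> approx_speed C (Sigma_pi \<phi> \<pi>)"
    using Sigma_tilde_subset_Sigma_pi[OF orth] zero_in_Sigma_tilde
    by (intro approx_speed_mono infdist_mono) blast+
qed

end
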